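(* Let $V$, $M$ and the bilinear form $b:V\times M\to\mathbb{R}$ be as described in the context, and let $B^T:M\to V'$ be defined by ${}_{V}\langle \Sigma, B^T\psi\rangle_{V'}=b(\Sigma,\psi)$ for all $\Sigma\in V$. Then $\operatorname{Ker} B^T=\{0\}$, i.e. if $\psi\in M$ satisfies $b(\Sigma,\psi)=0$ for all $\Sigma\in V$, then $\psi=0$.
   Context: Network: a stent is modelled by a finite connected graph with vertices $j=1,\dots,n_{\mathcal V}$ located at points $\mathcal V_j\in\mathbb{R}^3$ and oriented edges $i=1,\dots,n_{\mathcal E}$. $J_j^-$ is the set of edges leaving vertex $j$ and $J_j^+$ the set of edges entering vertex $j$. Edge $i$ is a curve of length $\ell^i>0$ with arc-length parametrization $\Phi^i:[0,\ell^i]\to\mathbb{R}^3$ (smooth), with $\Phi^i(0)$ the position of the vertex it leaves and $\Phi^i(\ell^i)$ the position of the vertex it enters; $t^i=(\Phi^i)'$ is the unit tangent. $Q^i:[0,\ell^i]\to\mathbb{R}^{3\times 3}$ is continuous with orthogonal values and $H^i\in\mathbb{R}^{3\times3}$ is a positive definite diagonal matrix. Loads $f^i\in L^2(0,\ell^i;\mathbb{R}^3)$. Matrices: $A^+_{I}\in\mathbb{R}^{3n_{\mathcal V}\times 3n_{\mathcal E}}$ is the block matrix whose $3\times3$ block in block row $j$, block column $i$ is $I_3$ if $i\in J_j^+$ and $0$ otherwise; $A^-_{I}$ is defined the same way with $J_j^-$. $\mathbb P^i_{\mathcal E}\in\mathbb{R}^{3\times 3n_{\mathcal E}}$ extracts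 the $i$-th block of three coordinates. Spaces: $L^2(\mathcal N;\mathbb{R}^3)=\prod_{i=1}^{n_{\mathcal E}}L^2(0,\ell^i;\mathbb{R}^3)$ and $L^2_{H^1}(\mathcal N;\mathbb{R}^3)=\prod_{i=1}^{n_{\mathcal E}}H^1(0,\ell^i;\mathbb{R}^3)$ (no continuity at vertices imposed), with norms $(\sum_i\|y^i\|^2)^{1/2}$. $\int_{\mathcal N}v:=\sum_i\int_0^{\ell^i}v^i\,ds$. $V=L^2(\mathcal N;\mathbb{R}^3)\times L^2(\mathcal N;\mathbb{R}^3)\times(\mathbb{R}^{3n_{\mathcal E}})^4\times\mathbb{R}^3\times\mathbb{R}^3$ with elements $\Sigma=(q,p,P_+,P_-,Q_+,Q_-,\alpha,\beta)$ (and $\Gamma=(\xi,\theta,\Theta_+,\Theta_-,\Xi_+,\Xi_-,\gamma,\delta)$), $M=L^2_{H^1}(\mathcal N;\mathbb{R}^3)\times L^2_{H^1}(\mathcal N;\mathbb{R}^3)\times\mathbb{R}^{3n_{\mathcal V}}\times\mathbb{R}^{3n_{\mathcal V}}$ with elements $\psi=(v,w,V,W)$; both carry the product Hilbert norms. Components of vectors in $\mathbb{R}^{3n_{\mathcal E}}$ are written $P_+=(P_+^1,\dots,P_+^{n_{\mathcal E}})$, etc. Forms: $a(\Sigma,\Gamma)=\sum_i\int_0^{\ell^i}Q^i(H^i)^{-1}(Q^i)^Tq^i\cdot\xi^i\,ds$; $b(\Sigma,\psi)=\sum_i\int_0^{\ell^i}\big(-p^i\cdot(\partial_sv^i+t^i\times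 w^i)-q^i\cdot\partial_sw^i\big)ds+\sum_i\big(P^i_+\cdot v^i(\ell^i)-P^i_-\cdot v^i(0)\big)+\sum_i\big(Q^i_+\cdot w^i(\ell^i)-Q^i_-\cdot w^i(0)\big)-(A^+_IP_+-A^-_IP_-)\cdot V-(A^+_IQ_+-A^-_IQ_-)\cdot W+\alpha\cdot\int_{\mathcal N}v+\beta\cdot\int_{\mathcal N}w$; $f(\psi)=-\sum_i\int_0^{\ell^i}f^i\cdot v^i\,ds$. *)

theory Defs
  imports "HOL-Analysis.Analysis"
begin

(* Edges are indexed by i < nE, vertices by j < nV.  src i = vertex edge i leaves,
   tgt i = vertex edge i enters.  Vectors of R^{3 nE} / R^{3 nV} are block-indexed
   functions nat => real^3 (only indices < nE / < nV matter). *)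

definition L2 :: "real \<Rightarrow> (real \<Rightarrow> real^3) \<Rightarrow> bool" where
  "L2 l f \<longleftrightarrow> f measurable_on {0..l} \<and> (\<lambda>s. (norm (f s))\<^sup>2) integrable_on {0..l}"

(* v in H^1(0,l;R^3) (continuous representative) with weak derivative dv in L^2 *)
definition H1_with_deriv :: "real \<Rightarrow> (real \<Rightarrow> real^3) \<Rightarrow> (real \<Rightarrow> real^3) \<Rightarrow> bool" where
  "H1_with_deriv l v dv \<longleftrightarrow> L2 l v \<and> L2 l dv \<and>
     (\<forall>x\<in>{0..l}. v x = v 0 + integral {0..x} dv)"

definition graph_adj :: "nat \<Rightarrow> (nat \<Rightarrow> nat) \<Rightarrow> (nat \<Rightarrow> nat) \<Rightarrow> nat \<Rightarrow> nat \<Rightarrow> bool" where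
  "graph_adj nE src tgt a c \<longleftrightarrow> (\<exists>i<nE. (src i = a \<and> tgt i = c) \<or> (src i = c \<and> tgt i = a))"

definition connected_graph :: "nat \<Rightarrow> nat \<Rightarrow> (nat \<Rightarrow> nat) \<Rightarrow> (nat \<Rightarrow> nat) \<Rightarrow> bool" where
  "connected_graph nV nE src tgt \<longleftrightarrow> (\<forall>i<nE. src i < nV \<and> tgt i < nV) \<and>
     (\<forall>j<nV. \<forall>k<nV. (graph_adj nE src tgt)\<^sup>*\<^sup>* j k)"

definition Aplus :: "nat \<Rightarrow> (nat \<Rightarrow> nat) \<Rightarrow> (nat \<Rightarrow> real^3) \<Rightarrow> nat \<Rightarrow> real^3" where
  "Aplus nE tgt P j = (\<Sum>i\<in>{i. i < nE \<and> tgt i = j}. P i)"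

definition Aminus :: "nat \<Rightarrow> (nat \<Rightarrow> nat) \<Rightarrow> (nat \<Rightarrow> real^3) \<Rightarrow> nat \<Rightarrow> real^3" where
  "Aminus nE src P j = (\<Sum>i\<in>{i. i < nE \<and> src i = j}. P i)"

definition dotV :: "nat \<Rightarrow> (nat \<Rightarrow> real^3) \<Rightarrow> (nat \<Rightarrow> real^3) \<Rightarrow> real" where
  "dotV nV X Y = (\<Sum>j<nV. X j \<bullet> Y j)"

definition int_net :: "nat \<Rightarrow> (nat \<Rightarrow> real) \<Rightarrow> (nat \<Rightarrow> real \<Rightarrow> real^3) \<Rightarrow> real^3" where
  "int_net nE len v = (\<Sum>i<nE. integral {0..len i} (v i))"

(* the bilinear form b(Sigma, psi); Sigma = (q,p,Pp,Pm,Qp,Qm,alpha,beta),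
   psi = (v,w,V,W) with weak derivatives dv, dw of v, w *)
definition bform ::
  "nat \<Rightarrow> nat \<Rightarrow> (nat \<Rightarrow> nat) \<Rightarrow> (nat \<Rightarrow> nat) \<Rightarrow> (nat \<Rightarrow> real) \<Rightarrow> (nat \<Rightarrow> real \<Rightarrow> real^3) \<Rightarrow>
   (nat \<Rightarrow> real \<Rightarrow> real^3) \<Rightarrow> (nat \<Rightarrow> real \<Rightarrow> real^3) \<Rightarrow>
   (nat \<Rightarrow> real^3) \<Rightarrow> (nat \<Rightarrow> real^3) \<Rightarrow> (nat \<Rightarrow> real^3) \<Rightarrow> (nat \<Rightarrow> real^3) \<Rightarrow> real^3 \<Rightarrow> real^3 \<Rightarrow>
   (nat \<Rightarrow> real \<Rightarrow> real^3) \<Rightarrow> (nat \<Rightarrow> real \<Rightarrow> real^3) \<Rightarrow> (nat \<Rightarrow> real \<Rightarrow> real^3) \<Rightarrow> (nat \<Rightarrow> real \<Rightarrow> real^3) \<Rightarrow>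
   (nat \<Rightarrow> real^3) \<Rightarrow> (nat \<Rightarrow> real^3) \<Rightarrow> real" where
  "bform nV nE src tgt len t q p Pp Pm Qp Qm \<alpha> \<beta> v dv w dw V W =
     (\<Sum>i<nE. integral {0..len i}
        (\<lambda>s. - (p i s \<bullet> (dv i s + cross3 (t i s) (w i s))) - q i s \<bullet> dw i s))
   + (\<Sum>i<nE. Pp i \<bullet> v i (len i) - Pm i \<bullet> v i 0)
   + (\<Sum>i<nE. Qp i \<bullet> w i (len i) - Qm i \<bullet> w i 0)
   - dotV nV (\<lambda>j. Aplus nE tgt Pp j - Aminus nE src Pm j) V
   - dotV nV (\<lambda>j. Aplus nE tgt Qp j - Aminus nE src Qm j) W
   + \<alpha> \<bullet> int_net nE len v + \<beta> \<bullet> int_net nE len w"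

end

theory Submission
  imports Defs
begin

(* Testing b with P_+, P_-, Q_+, Q_- equal to the mismatches between the end values of v, w
   and the vertex values V, W, and with alpha, beta equal to the means of v, w, turns
   b(Sigma, psi) into a sum of squares: so v, w take the values V, W at the vertices and have
   zero mean.  Testing with q or p equal to a constant vector times the indicator of [0, x] on
   a single edge gives that the integral of the derivative of w over [0, x] vanishes, hence w is
   constant on each edge, and, once w = 0, the same for v.  A function that is constant on each
   edge and continuous at the vertices of a connected graph is globally constant, and zero
   mean forces the constant to be 0. *)

lemma L2_integrable:
  assumes "L2 l f"
  shows "f integrable_on {0..l}"
proof (rule measurable_bounded_by_integrable_imp_integrable)
  show "f \<in> borel_measurable (lebesgue_on {0..l})"
    using assms unfolding L2_def by (intro measurable_on_imp_borel_measurable_lebesgue) simp_all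
  show "(\<lambda>s. 1 + (norm (f s))\<^sup>2) integrable_on {0..l}"
    using assms unfolding L2_def by (intro integrable_add) (simp_all add: integrable_const_ivl)
  show "norm (f s) \<le> 1 + (norm (f s))\<^sup>2" for s
  proof -
    have "0 \<le> (norm (f s) - 1)\<^sup>2"
      by simp
    then have "2 * norm (f s) \<le> 1 + (norm (f s))\<^sup>2"
      by (simp add: power2_diff)
    then show ?thesis
      using norm_ge_zero[of "f s"] by linarith
  qed
qed simp

lemma L2_zero: "L2 l (\<lambda>s. 0)"
  unfolding L2_def by auto

lemma L2_step: "L2 l (\<lambda>s. if s \<in> {0..x} then e else 0)"
proof -
  have step_integrable: "(\<lambda>s. if s \<in> {0..x} then c else 0) integrable_on {0..l}"
    for c :: "'a :: euclidean_space"
    unfolding integrable_restrict_Int by (simp add: Int_atLeastAtMost integrable_const_ivl)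
  have "(\<lambda>s. if s \<in> {0..x} then e else 0) \<in> borel_measurable (lebesgue_on {0..l})"
    by (rule integrable_imp_measurable[OF step_integrable])
  then have "(\<lambda>s. if s \<in> {0..x} then e else 0) measurable_on {0..l}"
    by (subst measurable_on_iff_borel_measurable) simp_all
  moreover have "(\<lambda>s. (norm (if s \<in> {0..x} then e else 0))\<^sup>2) = (\<lambda>s. if s \<in> {0..x} then (norm e)\<^sup>2 else 0)"
    by auto
  then have "(\<lambda>s. (norm (if s \<in> {0..x} then e else 0))\<^sup>2) integrable_on {0..l}"
    using step_integrable[of "(norm e)\<^sup>2"] by simp
  ultimately show ?thesis
    unfolding L2_def ..
qed

lemma integral_inner_step:
  fixes g :: "real \<Rightarrow> 'a::euclidean_space"
  assumes "g integrable_on {0..l}" "x \<in> {0..l}"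
  shows "integral {0..l} (\<lambda>s. (if s \<in> {0..x} then e else 0) \<bullet> g s) = e \<bullet> integral {0..x} g"
proof -
  have "g integrable_on {0..x}"
    using assms by (auto intro: integrable_on_subinterval)
  have "integral {0..l} (\<lambda>s. (if s \<in> {0..x} then e else 0) \<bullet> g s)
      = integral ({0..x} \<inter> {0..l}) (\<lambda>s. e \<bullet> g s)"
    unfolding integral_restrict_Int[symmetric] by (rule integral_cong) simp
  also have "{0..x} \<inter> {0..l} = {0..x}"
    using assms(2) by auto
  also have "integral {0..x} (\<lambda>s. e \<bullet> g s) = e \<bullet> integral {0..x} g"
    using integral_linear[OF \<open>g integrable_on {0..x}\<close> bounded_linear_inner_right[of e]]
    by (simp add: o_def)
  finally show ?thesis .
qed

lemma H1_constant_if_orthogonal_to_steps: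
  assumes f: "H1_with_deriv l f df"
    and orth: "\<And>x e. x \<in> {0..l} \<Longrightarrow> integral {0..l} (\<lambda>s. (if s \<in> {0..x} then e else 0) \<bullet> df s) = 0"
    and x: "x \<in> {0..l}"
  shows "f x = f 0"
proof -
  have "df integrable_on {0..l}"
    using f unfolding H1_with_deriv_def by (blast intro: L2_integrable)
  then have "e \<bullet> integral {0..x} df = 0" for e
    using orth[OF x, of e] integral_inner_step[OF _ x, of df e] by simp
  then have "integral {0..x} df = 0"
    using inner_eq_zero_iff by blast
  moreover have "f x = f 0 + integral {0..x} df"
    using f x unfolding H1_with_deriv_def by blast
  ultimately show ?thesis
    by simp
qed

lemma connected_graph_vertex_values_eq:
  assumes conn: "connected_graph nV nE src tgt"
    and edge: "\<And>i. i < nE \<Longrightarrow> F (src i) = F (tgt i)"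
    and "j < nV" "k < nV"
  shows "F j = F k"
proof -
  have adj: "F a = F c" if "graph_adj nE src tgt a c" for a c
    using that edge unfolding graph_adj_def by metis
  have "(graph_adj nE src tgt)\<^sup>*\<^sup>* j k"
    using conn assms(3,4) unfolding connected_graph_def by blast
  then show ?thesis
    by (induction rule: rtranclp_induct) (auto dest: adj)
qed

lemma edgewise_constant_mean_zero_vanishes:
  fixes f :: "nat \<Rightarrow> real \<Rightarrow> real^3" and F :: "nat \<Rightarrow> real^3"
  assumes conn: "connected_graph nV nE src tgt"
    and nE_pos: "nE \<ge> 1"
    and len_pos: "\<forall>i<nE. len i > 0"
    and const: "\<forall>i<nE. \<forall>s\<in>{0..len i}. f i s = f i 0"
    and at_src: "\<forall>i<nE. f i 0 = F (src i)"
    and at_tgt: "\<forall>i<nE. f i (len i) = F (tgt i)"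
    and mean: "int_net nE len f = 0"
  shows "(\<forall>i<nE. \<forall>s\<in>{0..len i}. f i s = 0) \<and> (\<forall>j<nV. F j = 0)"
proof -
  have ends: "src i < nV" "tgt i < nV" if "i < nE" for i
    using conn that unfolding connected_graph_def by auto
  define c where "c = F (src 0)"
  have edge: "F (src i) = F (tgt i)" if "i < nE" for i
    using const at_src at_tgt len_pos that by (metis atLeastAtMost_iff less_imp_le order_refl)
  have F_c: "F j = c" if "j < nV" for j
    unfolding c_def using connected_graph_vertex_values_eq[OF conn edge that ends(1)] nE_pos by simp
  have f_c: "f i s = c" if "i < nE" "s \<in> {0..len i}" for i s
    using const at_src F_c ends that by metis
  have "integral {0..len i} (f i) = len i *\<^sub>R c" if "i < nE" for i
  proof -
    have "integral {0..len i} (f i) = integral {0..len i} (\<lambda>_. c)"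
      using f_c that by (intro integral_cong) auto
    then show ?thesis
      using len_pos that by (simp add: less_imp_le)
  qed
  then have "int_net nE len f = (\<Sum>i<nE. len i) *\<^sub>R c"
    unfolding int_net_def scaleR_sum_left by simp
  moreover have "(\<Sum>i<nE. len i) > 0"
    using len_pos nE_pos by (intro sum_pos) (auto simp: lessThan_empty_iff)
  ultimately have "c = 0"
    using mean by simp
  then show ?thesis
    using f_c F_c by simp
qed

lemma dotV_incidence:
  assumes "\<forall>i<nE. src i < nV \<and> tgt i < nV"
  shows "dotV nV (\<lambda>j. Aplus nE tgt P j - Aminus nE src Q j) X
       = (\<Sum>i<nE. P i \<bullet> X (tgt i) - Q i \<bullet> X (src i))"
proof -
  have "(\<Sum>j<nV. \<Sum>i | i < nE \<and> f i = j. R i \<bullet> X j) = (\<Sum>i<nE. R i \<bullet> X (f i))"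
    if "\<forall>i<nE. f i < nV" for f and R :: "nat \<Rightarrow> real^3"
  proof -
    have "(\<Sum>j<nV. \<Sum>i | i < nE \<and> f i = j. R i \<bullet> X j)
        = (\<Sum>j<nV. \<Sum>i | i \<in> {..<nE} \<and> f i = j. R i \<bullet> X (f i))"
      by (intro sum.cong) auto
    also have "\<dots> = (\<Sum>i<nE. R i \<bullet> X (f i))"
      using that by (intro sum.group) auto
    finally show ?thesis .
  qed
  then show ?thesis
    using assms unfolding dotV_def Aplus_def Aminus_def
    by (simp add: inner_diff_left sum_subtractf inner_sum_left)
qed

lemma bform_boundary_terms:
  assumes "\<forall>i<nE. src i < nV \<and> tgt i < nV"
  shows "bform nV nE src tgt len t (\<lambda>_ _. 0) (\<lambda>_ _. 0) Pp Pm Qp Qm \<alpha> \<beta> v dv w dw V W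
       = (\<Sum>i<nE. Pp i \<bullet> (v i (len i) - V (tgt i)) + Pm i \<bullet> (V (src i) - v i 0)
                 + Qp i \<bullet> (w i (len i) - W (tgt i)) + Qm i \<bullet> (W (src i) - w i 0))
         + \<alpha> \<bullet> int_net nE len v + \<beta> \<bullet> int_net nE len w"
  unfolding bform_def dotV_incidence[OF assms]
  by (simp add: inner_diff_right sum.distrib sum_subtractf algebra_simps)

lemma bform_kernel_boundary_conditions:
  assumes ends: "\<forall>i<nE. src i < nV \<and> tgt i < nV"
    and ker: "\<And>Pp Pm Qp Qm \<alpha> \<beta>.
      bform nV nE src tgt len t (\<lambda>_ _. 0) (\<lambda>_ _. 0) Pp Pm Qp Qm \<alpha> \<beta> v dv w dw V W = 0"
  shows "\<forall>i<nE. v i 0 = V (src i) \<and> v i (len i) = V (tgt i) \<and> w i 0 = W (src i) \<and> w i (len i) = W (tgt i)"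
    and "int_net nE len v = 0" and "int_net nE len w = 0"
proof -
  define a where "a i = v i (len i) - V (tgt i)" for i
  define b where "b i = V (src i) - v i 0" for i
  define c where "c i = w i (len i) - W (tgt i)" for i
  define d where "d i = W (src i) - w i 0" for i
  define Iv where "Iv = int_net nE len v"
  define Iw where "Iw = int_net nE len w"
  have "(\<Sum>i<nE. a i \<bullet> a i + b i \<bullet> b i + c i \<bullet> c i + d i \<bullet> d i) + Iv \<bullet> Iv + Iw \<bullet> Iw
      = bform nV nE src tgt len t (\<lambda>_ _. 0) (\<lambda>_ _. 0) a b c d Iv Iw v dv w dw V W"
    unfolding bform_boundary_terms[OF ends] a_def b_def c_def d_def Iv_def Iw_def by simp
  also have "\<dots> = 0"
    by (rule ker)
  finally have "(\<Sum>i<nE. a i \<bullet> a i + b i \<bullet> b i + c i \<bullet> c i + d i \<bullet> d i) + Iv \<bullet> Iv + Iw \<bullet> Iw = 0" .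
  then have "\<forall>i<nE. a i = 0 \<and> b i = 0 \<and> c i = 0 \<and> d i = 0" "Iv = 0" "Iw = 0"
    by (simp_all add: add_nonneg_eq_0_iff sum_nonneg sum_nonneg_eq_0_iff)
  then show "\<forall>i<nE. v i 0 = V (src i) \<and> v i (len i) = V (tgt i) \<and> w i 0 = W (src i) \<and> w i (len i) = W (tgt i)"
    and "int_net nE len v = 0" and "int_net nE len w = 0"
    unfolding a_def b_def c_def d_def Iv_def Iw_def by simp_all
qed

definition edge_step :: "nat \<Rightarrow> real \<Rightarrow> real^3 \<Rightarrow> nat \<Rightarrow> real \<Rightarrow> real^3" where
  "edge_step i x e = (\<lambda>k s. if k = i \<and> s \<in> {0..x} then e else 0)"

lemma L2_edge_step: "L2 l (edge_step i x e k)"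
  using L2_step[of l x e] L2_zero[of l] by (cases "k = i") (simp_all add: edge_step_def)

lemma bform_edge_steps:
  assumes "i < nE"
  shows "bform nV nE src tgt len t (edge_step i x e) (edge_step i x e') (\<lambda>_. 0) (\<lambda>_. 0) (\<lambda>_. 0) (\<lambda>_. 0) 0 0
           v dv w dw V W
       = integral {0..len i} (\<lambda>s. - ((if s \<in> {0..x} then e' else 0) \<bullet> (dv i s + cross3 (t i s) (w i s)))
                                  - (if s \<in> {0..x} then e else 0) \<bullet> dw i s)"
proof -
  have "(\<Sum>k<nE. integral {0..len k} (\<lambda>s. - (edge_step i x e' k s \<bullet> (dv k s + cross3 (t k s) (w k s)))
                                          - edge_step i x e k s \<bullet> dw k s))
      = (\<Sum>k<nE. if k = i then integral {0..len i} (\<lambda>s. - ((if s \<in> {0..x} then e' else 0) \<bullet> (dv i s + cross3 (t i s) (w i s)))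
                                  - (if s \<in> {0..x} then e else 0) \<bullet> dw i s) else 0)"
    by (intro sum.cong refl) (simp add: edge_step_def)
  then show ?thesis
    unfolding bform_def Aplus_def Aminus_def dotV_def int_net_def using assms by simp
qed

lemma bform_kernel_w_edgewise_constant:
  assumes ker: "\<And>x e e'. bform nV nE src tgt len t (edge_step i x e) (edge_step i x e')
                   (\<lambda>_. 0) (\<lambda>_. 0) (\<lambda>_. 0) (\<lambda>_. 0) 0 0 v dv w dw V W = 0"
    and i: "i < nE" and w: "H1_with_deriv (len i) (w i) (dw i)" and s: "s \<in> {0..len i}"
  shows "w i s = w i 0"
proof (rule H1_constant_if_orthogonal_to_steps[OF w _ s])
  show "integral {0..len i} (\<lambda>s. (if s \<in> {0..x} then e else 0) \<bullet> dw i s) = 0" for x e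
    using ker[of x e 0] unfolding bform_edge_steps[OF i] by simp
qed

lemma bform_kernel_v_edgewise_constant:
  assumes ker: "\<And>x e e'. bform nV nE src tgt len t (edge_step i x e) (edge_step i x e')
                   (\<lambda>_. 0) (\<lambda>_. 0) (\<lambda>_. 0) (\<lambda>_. 0) 0 0 v dv w dw V W = 0"
    and i: "i < nE" and v: "H1_with_deriv (len i) (v i) (dv i)" and s: "s \<in> {0..len i}"
    and w_zero: "\<forall>s\<in>{0..len i}. w i s = 0"
  shows "v i s = v i 0"
proof (rule H1_constant_if_orthogonal_to_steps[OF v _ s])
  fix x e
  have "integral {0..len i} (\<lambda>s. - ((if s \<in> {0..x} then e else 0) \<bullet> (dv i s + cross3 (t i s) (w i s))))
      = integral {0..len i} (\<lambda>s. - ((if s \<in> {0..x} then e else 0) \<bullet> dv i s))"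
    using w_zero by (intro integral_cong) simp
  then show "integral {0..len i} (\<lambda>s. (if s \<in> {0..x} then e else 0) \<bullet> dv i s) = 0"
    using ker[of x 0 e] unfolding bform_edge_steps[OF i] by simp
qed

theorem lemma3p1:
  fixes nV nE :: nat
    and src tgt :: "nat \<Rightarrow> nat"
    and pos :: "nat \<Rightarrow> real^3"
    and len :: "nat \<Rightarrow> real"
    and \<Phi> t :: "nat \<Rightarrow> real \<Rightarrow> real^3"
    and v dv w dw :: "nat \<Rightarrow> real \<Rightarrow> real^3"
    and V W :: "nat \<Rightarrow> real^3"
  assumes conn: "connected_graph nV nE src tgt"
    and nE_pos: "nE \<ge> 1"
    and len_pos: "\<forall>i<nE. len i > 0"
    and tangent: "\<forall>i<nE. \<forall>s\<in>{0..len i}. (\<Phi> i has_vector_derivative t i s) (at s within {0..len i})"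
    and t_cont: "\<forall>i<nE. continuous_on {0..len i} (t i)"
    and t_unit: "\<forall>i<nE. \<forall>s\<in>{0..len i}. norm (t i s) = 1"
    and Phi_ends: "\<forall>i<nE. \<Phi> i 0 = pos (src i) \<and> \<Phi> i (len i) = pos (tgt i)"
    and v_H1: "\<forall>i<nE. H1_with_deriv (len i) (v i) (dv i)"
    and w_H1: "\<forall>i<nE. H1_with_deriv (len i) (w i) (dw i)"
    and ker: "\<forall>q p Pp Pm Qp Qm \<alpha> \<beta>. (\<forall>i<nE. L2 (len i) (q i) \<and> L2 (len i) (p i)) \<longrightarrow>
               bform nV nE src tgt len t q p Pp Pm Qp Qm \<alpha> \<beta> v dv w dw V W = 0"
  shows "(\<forall>i<nE. \<forall>s\<in>{0..len i}. v i s = 0 \<and> w i s = 0) \<and> (\<forall>j<nV. V j = 0 \<and> W j = 0)"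
proof -
  have ends: "\<forall>i<nE. src i < nV \<and> tgt i < nV"
    using conn unfolding connected_graph_def by blast
  have ker_boundary: "bform nV nE src tgt len t (\<lambda>_ _. 0) (\<lambda>_ _. 0) Pp Pm Qp Qm \<alpha> \<beta> v dv w dw V W = 0"
    for Pp Pm Qp Qm \<alpha> \<beta>
    using ker by (simp add: L2_zero)
  note boundary = bform_kernel_boundary_conditions(1)[OF ends ker_boundary]
    and v_mean = bform_kernel_boundary_conditions(2)[OF ends ker_boundary]
    and w_mean = bform_kernel_boundary_conditions(3)[OF ends ker_boundary]
  have ker_steps: "bform nV nE src tgt len t (edge_step i x e) (edge_step i x e')
                     (\<lambda>_. 0) (\<lambda>_. 0) (\<lambda>_. 0) (\<lambda>_. 0) 0 0 v dv w dw V W = 0" for i x e e'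
    using ker by (simp add: L2_edge_step)
  have "\<forall>i<nE. \<forall>s\<in>{0..len i}. w i s = w i 0"
    using bform_kernel_w_edgewise_constant[OF ker_steps] w_H1 by blast
  then have w_zero: "(\<forall>i<nE. \<forall>s\<in>{0..len i}. w i s = 0) \<and> (\<forall>j<nV. W j = 0)"
    using edgewise_constant_mean_zero_vanishes[OF conn nE_pos len_pos _ _ _ w_mean] boundary by blast
  then have "\<forall>i<nE. \<forall>s\<in>{0..len i}. v i s = v i 0"
    using bform_kernel_v_edgewise_constant[OF ker_steps] v_H1 by blast
  then have "(\<forall>i<nE. \<forall>s\<in>{0..len i}. v i s = 0) \<and> (\<forall>j<nV. V j = 0)"
    using edgewise_constant_mean_zero_vanishes[OF conn nE_pos len_pos _ _ _ v_mean] boundary by blast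
  with w_zero show ?thesis
    by blast
qed

end
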